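(* Let $\ell:\mathbb{R}\to\mathbb{R}$ be non-decreasing, convex and non-negative, differentiable on $[-\ell(0)/2,\infty)$ with $\ell'(z)>0$ for $z\ge-\ell(0)/2$. Let $d=\sup\{z\in\mathbb{R}:\partial\ell(z)=\{0\}\}$, and $d=-\infty$ if there is no such $z$; assume $-\ell(0)/2>d$. For $\rho\ge-\ell(0)/2$ and $z\ge0$ define $\xi(z,\rho)=\frac{\ell(\rho+z)+\ell(\rho-z)-2\ell(\rho)}{z\ell'(\rho)}$ for $z>0$ and $\xi(0,\rho)=0$. Suppose there is a function $\bar\xi:[0,\infty)\to\mathbb{R}$ that is continuous and strictly increasing with $\bar\xi(0)=0$ and $\lim_{z\to\infty}\bar\xi(z)>1$, such that $\sup_{\rho\ge-\ell(0)/2}\xi(z,\rho)\le\bar\xi(z)$ for all $z\ge0$. Let $\psi(\theta,\rho)=\ell(\rho)-\inf_{z\in\mathbb{R}}\{\frac{1+\theta}{2}\ell(\rho-z)+\frac{1-\theta}{2}\ell(\rho+z)\}$. Then there exist $\varepsilon>0$ and a function $\widetilde\psi$ on $[0,\varepsilon]$ such that $\widetilde\psi(0)=0$, $\widetilde\psi(\theta)>0$ for $0<\theta\le\varepsilon$, $\widetilde\psi$ is continuous and strictly increasing on $[0,\varepsilon]$, and $\widetilde\psi(\theta)\le\inf_{\rho\ge-\ell(0)/2}\psi(\theta,\rho)$ for $0\le\theta\le\varepsilon$.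
   Context: $\partial\ell(z)$ denotes the subdifferential of the convex function $\ell$ at $z$. *)

theory Defs
  imports "HOL-Analysis.Analysis"
begin

definition subdiff :: "(real \<Rightarrow> real) \<Rightarrow> real \<Rightarrow> real set" where
  "subdiff l z = {g. \<forall>y. l y \<ge> l z + g * (y - z)}"

text \<open>d = sup{z. subdiff l z = {0}}, with d = -infinity if the set is empty (ereal Sup of empty set).\<close>
definition dval :: "(real \<Rightarrow> real) \<Rightarrow> ereal" where
  "dval l = Sup (ereal ` {z. subdiff l z = {0}})"

definition xi :: "(real \<Rightarrow> real) \<Rightarrow> real \<Rightarrow> real \<Rightarrow> real" where
  "xi l z \<rho> = (if z = 0 then 0
     else (l (\<rho> + z) + l (\<rho> - z) - 2 * l \<rho>) / (z * deriv l \<rho>))"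

definition psi :: "(real \<Rightarrow> real) \<Rightarrow> real \<Rightarrow> real \<Rightarrow> ereal" where
  "psi l \<theta> \<rho> = ereal (l \<rho>) -
     (INF z\<in>(UNIV::real set). ereal ((1 + \<theta>) / 2 * l (\<rho> - z) + (1 - \<theta>) / 2 * l (\<rho> + z)))"

end

theory Submission
  imports Defs
begin

text \<open>Let \<open>h\<close> be the inverse of \<open>xibar\<close> on \<open>[0, 1]\<close>, defined on \<open>[0, xibar 1]\<close>, and put \<open>z = h (\<theta>/2)\<close>. Writing \<open>V\<close> for the
  objective of \<open>psi\<close> at this \<open>z\<close>,
  \<open>\<ell>(\<rho>) - V = \<theta>/2 (\<ell>(\<rho>+z) - \<ell>(\<rho>-z)) - (\<ell>(\<rho>+z) + \<ell>(\<rho>-z) - 2\<ell>(\<rho>))/2\<close>.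
  Monotonicity and the tangent line at \<open>\<rho>\<close> bound the first term below by \<open>\<theta> z \<ell>'(\<rho>)/2\<close>,
  while \<open>xi z \<rho> \<le> xibar z = \<theta>/2\<close> bounds the second term above by \<open>\<theta> z \<ell>'(\<rho>)/4\<close>.
  Since \<open>\<ell>'\<close> is non-decreasing, \<open>psi \<theta> \<rho> \<ge> \<ell>'(-\<ell>(0)/2) \<theta> h(\<theta>/2) / 4\<close> uniformly in
  \<open>\<rho> \<ge> -\<ell>(0)/2\<close>, and the right-hand side is the required function.\<close>

lemma convex_on_above_tangent_at:
  fixes l :: "real \<Rightarrow> real"
  assumes "convex_on UNIV l" and "l differentiable (at r)"
  shows "l y \<ge> l r + deriv l r * (y - r)"
proof -
  have "(l has_field_derivative deriv l r) (at r within UNIV)"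
    using assms(2) by (simp add: DERIV_deriv_iff_real_differentiable)
  from convex_on_imp_above_tangent[OF assms(1) _ _ _ this, of y] show ?thesis by simp
qed

lemma convex_on_deriv_mono:
  fixes l :: "real \<Rightarrow> real"
  assumes cvx: "convex_on UNIV l"
    and "l differentiable (at a)" "l differentiable (at b)" and "a \<le> b"
  shows "deriv l a \<le> deriv l b"
proof (cases "a = b")
  case False
  have "l b \<ge> l a + deriv l a * (b - a)" "l a \<ge> l b + deriv l b * (a - b)"
    using convex_on_above_tangent_at[OF cvx] assms(2,3) by auto
  then have "(deriv l a - deriv l b) * (b - a) \<le> 0" by (simp add: algebra_simps)
  with False \<open>a \<le> b\<close> show ?thesis by (simp add: mult_le_0_iff)
qed simp

lemma strict_mono_on_continuous_image_Icc:
  fixes f :: "'a::linear_continuum_topology \<Rightarrow> 'b::linorder_topology"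
  assumes "continuous_on {a..b} f" "strict_mono_on {a..b} f" "a \<le> b"
  shows "f ` {a..b} = {f a..f b}"
proof
  show "f ` {a..b} \<subseteq> {f a..f b}"
    using assms(2) \<open>a \<le> b\<close> by (auto simp: strict_mono_on_less_eq)
  show "{f a..f b} \<subseteq> f ` {a..b}"
    using IVT'[OF _ _ \<open>a \<le> b\<close> assms(1)] by (fastforce intro: image_eqI)
qed

lemma strict_mono_on_the_inv_into:
  fixes f :: "'a::linorder \<Rightarrow> 'b::linorder"
  assumes "strict_mono_on A f"
  shows "strict_mono_on (f ` A) (the_inv_into A f)"
proof (rule strict_mono_onI)
  fix u v assume "u \<in> f ` A" "v \<in> f ` A" "u < v"
  then obtain x y where "x \<in> A" "y \<in> A" "u = f x" "v = f y" by blast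
  moreover have "inj_on f A" using assms by (rule strict_mono_on_imp_inj_on)
  ultimately show "the_inv_into A f u < the_inv_into A f v"
    using assms \<open>u < v\<close> by (simp add: the_inv_into_f_f strict_mono_on_less)
qed

lemma continuous_strict_mono_on_inverse_Icc:
  fixes f :: "real \<Rightarrow> real"
  assumes cont: "continuous_on {a..b} f" and mono: "strict_mono_on {a..b} f" and "a \<le> b"
  obtains g where "continuous_on {f a..f b} g" "strict_mono_on {f a..f b} g" "g (f a) = a"
    and "\<And>y. y \<in> {f a..f b} \<Longrightarrow> g y \<in> {a..b} \<and> f (g y) = y"
proof
  have inj: "inj_on f {a..b}" using mono by (rule strict_mono_on_imp_inj_on)
  have img: "f ` {a..b} = {f a..f b}"
    using strict_mono_on_continuous_image_Icc[OF cont mono \<open>a \<le> b\<close>] .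
  show "continuous_on {f a..f b} (the_inv_into {a..b} f)"
    using continuous_on_inv_into[OF cont compact_Icc inj] by (simp add: img)
  show "strict_mono_on {f a..f b} (the_inv_into {a..b} f)"
    using strict_mono_on_the_inv_into[OF mono] by (simp add: img)
  show "the_inv_into {a..b} f (f a) = a"
    using the_inv_into_f_f[OF inj] \<open>a \<le> b\<close> by simp
  show "the_inv_into {a..b} f y \<in> {a..b} \<and> f (the_inv_into {a..b} f y) = y"
    if "y \<in> {f a..f b}" for y
    using that the_inv_into_into[OF inj _ order_refl] f_the_inv_into_f[OF inj] by (auto simp: img)
qed

lemma strict_mono_on_times_self:
  fixes g :: "real \<Rightarrow> real"
  assumes "strict_mono_on {0..e} g" and "g 0 \<ge> 0"
  shows "strict_mono_on {0..e} (\<lambda>x. x * g x)"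
proof (rule strict_mono_onI)
  fix x y assume x: "x \<in> {0..e}" and y: "y \<in> {0..e}" and "x < y"
  have "g 0 \<le> g x" "g x < g y"
    using assms(1) x y \<open>x < y\<close> by (auto simp: strict_mono_on_def order_le_less)
  then have "x * g x \<le> x * g y" using x by (intro mult_left_mono) auto
  also have "\<dots> < y * g y"
    using \<open>x < y\<close> \<open>g 0 \<le> g x\<close> \<open>g x < g y\<close> assms(2) by (intro mult_strict_right_mono) auto
  finally show "x * g x < y * g y" .
qed

lemma psi_ge_objective:
  "ereal (l \<rho> - ((1 + \<theta>) / 2 * l (\<rho> - z) + (1 - \<theta>) / 2 * l (\<rho> + z))) \<le> psi l \<theta> \<rho>"
    (is "ereal (l \<rho> - ?V) \<le> _")
proof -
  have "(INF z\<in>UNIV. ereal ((1 + \<theta>) / 2 * l (\<rho> - z) + (1 - \<theta>) / 2 * l (\<rho> + z)))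
          \<le> ereal ?V"
    by (rule INF_lower) simp
  then have "ereal (l \<rho>) - ereal ?V \<le> psi l \<theta> \<rho>"
    unfolding psi_def by (rule ereal_minus_mono[OF order_refl])
  then show ?thesis by simp
qed

lemma psi_ge_of_xi_le:
  fixes l :: "real \<Rightarrow> real"
  assumes mono: "mono l" and cvx: "convex_on UNIV l"
    and diff: "l differentiable (at \<rho>)" and dpos: "deriv l \<rho> > 0"
    and "0 \<le> \<theta>" "0 \<le> z" and xi_le: "xi l z \<rho> \<le> \<theta> / 2"
  shows "ereal (\<theta> * z * deriv l \<rho> / 4) \<le> psi l \<theta> \<rho>"
proof -
  have second_diff: "l (\<rho> + z) + l (\<rho> - z) - 2 * l \<rho> \<le> z * deriv l \<rho> * (\<theta> / 2)"
  proof (cases "z = 0")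
    case False
    with \<open>0 \<le> z\<close> dpos have "z * deriv l \<rho> > 0" by simp
    with xi_le False show ?thesis unfolding xi_def by (simp add: divide_le_eq mult.commute)
  qed simp
  have "l (\<rho> + z) \<ge> l \<rho> + deriv l \<rho> * z"
    using convex_on_above_tangent_at[OF cvx diff, of "\<rho> + z"] by simp
  moreover have "l (\<rho> - z) \<le> l \<rho>" using mono \<open>0 \<le> z\<close> by (simp add: monoD)
  ultimately have "\<theta> / 2 * (deriv l \<rho> * z) \<le> \<theta> / 2 * (l (\<rho> + z) - l (\<rho> - z))"
    using \<open>0 \<le> \<theta>\<close> by (intro mult_left_mono) auto
  with second_diff
  have "\<theta> * z * deriv l \<rho> / 4 \<le> l \<rho> - ((1 + \<theta>) / 2 * l (\<rho> - z) + (1 - \<theta>) / 2 * l (\<rho> + z))"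
    by (simp add: field_simps)
  then show ?thesis using psi_ge_objective order_trans ereal_less_eq(3) by blast
qed

lemma psi_ge_on_halfline:
  fixes l :: "real \<Rightarrow> real"
  assumes mono: "mono l" and cvx: "convex_on UNIV l"
    and diff: "\<forall>x \<ge> a. l differentiable (at x)" and dpos: "deriv l a > 0"
    and "0 \<le> \<theta>" "0 \<le> z" and sup_le: "(SUP x\<in>{a..}. ereal (xi l z x)) \<le> ereal (\<theta> / 2)"
    and "a \<le> \<rho>"
  shows "ereal (\<theta> * z * deriv l a / 4) \<le> psi l \<theta> \<rho>"
proof -
  have "ereal (xi l z \<rho>) \<le> (SUP x\<in>{a..}. ereal (xi l z x))"
    using \<open>a \<le> \<rho>\<close> by (intro SUP_upper) auto
  with sup_le have "xi l z \<rho> \<le> \<theta> / 2" using ereal_less_eq(3) order_trans by blast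
  moreover have "deriv l a \<le> deriv l \<rho>"
    using convex_on_deriv_mono[OF cvx] diff \<open>a \<le> \<rho>\<close> by simp
  ultimately have "ereal (\<theta> * z * deriv l \<rho> / 4) \<le> psi l \<theta> \<rho>"
    using dpos diff \<open>a \<le> \<rho>\<close> \<open>0 \<le> \<theta>\<close> \<open>0 \<le> z\<close> by (intro psi_ge_of_xi_le[OF mono cvx]) auto
  moreover have "\<theta> * z * deriv l a \<le> \<theta> * z * deriv l \<rho>"
    using \<open>deriv l a \<le> deriv l \<rho>\<close> \<open>0 \<le> \<theta>\<close> \<open>0 \<le> z\<close> by (intro mult_left_mono) auto
  ultimately show ?thesis by (meson divide_right_mono ereal_less_eq(3) order_trans zero_le_numeral)
qed

theorem lemma7:
  fixes l :: "real \<Rightarrow> real" and xibar :: "real \<Rightarrow> real"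
  assumes mono: "mono l"
    and cvx: "convex_on UNIV l"
    and nonneg: "\<forall>z. l z \<ge> 0"
    and diff: "\<forall>z \<ge> - l 0 / 2. l differentiable (at z)"
    and dpos: "\<forall>z \<ge> - l 0 / 2. deriv l z > 0"
    and d_lt: "dval l < ereal (- l 0 / 2)"
    and xibar_cont: "continuous_on {0..} xibar"
    and xibar_mono: "strict_mono_on {0..} xibar"
    and xibar0: "xibar 0 = 0"
    and xibar_lim: "\<exists>L. ((\<lambda>z. ereal (xibar z)) \<longlongrightarrow> L) at_top \<and> L > 1"
    and xi_bound: "\<forall>z \<ge> 0. (SUP \<rho>\<in>{- l 0 / 2..}. ereal (xi l z \<rho>)) \<le> ereal (xibar z)"
  shows "\<exists>\<epsilon> > 0. \<exists>psit :: real \<Rightarrow> real.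
           psit 0 = 0 \<and>
           (\<forall>\<theta>. 0 < \<theta> \<and> \<theta> \<le> \<epsilon> \<longrightarrow> psit \<theta> > 0) \<and>
           continuous_on {0..\<epsilon>} psit \<and>
           strict_mono_on {0..\<epsilon>} psit \<and>
           (\<forall>\<theta>. 0 \<le> \<theta> \<and> \<theta> \<le> \<epsilon> \<longrightarrow>
              ereal (psit \<theta>) \<le> (INF \<rho>\<in>{- l 0 / 2..}. psi l \<theta> \<rho>))"
proof -
  define a where "a = - l 0 / 2"
  define c where "c = deriv l a"
  define \<epsilon> where "\<epsilon> = xibar 1"
  have mono01: "strict_mono_on {0..1} xibar"
    using xibar_mono by (rule monotone_on_subset) auto
  obtain h where h_cont: "continuous_on {0..\<epsilon>} h" and h_mono: "strict_mono_on {0..\<epsilon>} h"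
    and h0: "h 0 = 0" and h_inv: "\<And>y. y \<in> {0..\<epsilon>} \<Longrightarrow> h y \<in> {0..1} \<and> xibar (h y) = y"
    using continuous_strict_mono_on_inverse_Icc[OF continuous_on_subset[OF xibar_cont] mono01]
    by (auto simp: xibar0 \<epsilon>_def)
  define psit where "psit \<theta> = c / 4 * (\<theta> * h (\<theta> / 2))" for \<theta>
  have "\<epsilon> > 0" using strict_mono_onD[OF mono01, of 0 1] by (simp add: xibar0 \<epsilon>_def)
  have "c > 0" using dpos by (simp add: c_def a_def)
  have bound: "ereal (psit \<theta>) \<le> psi l \<theta> \<rho>" if "\<theta> \<in> {0..\<epsilon>}" and "a \<le> \<rho>" for \<theta> \<rho>
  proof -
    have "h (\<theta> / 2) \<ge> 0" "xibar (h (\<theta> / 2)) = \<theta> / 2" using h_inv[of "\<theta> / 2"] that by auto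
    then have "(SUP x\<in>{a..}. ereal (xi l (h (\<theta> / 2)) x)) \<le> ereal (\<theta> / 2)"
      using xi_bound by (metis a_def)
    then show ?thesis
      using psi_ge_on_halfline[OF mono cvx _ _ _ \<open>h (\<theta> / 2) \<ge> 0\<close> _ \<open>a \<le> \<rho>\<close>] diff dpos that
      by (simp add: a_def c_def psit_def algebra_simps)
  qed
  have "strict_mono_on {0..\<epsilon>} (\<lambda>\<theta>. \<theta> * h (\<theta> / 2))"
    using h_mono h0 by (intro strict_mono_on_times_self) (auto simp: strict_mono_on_def)
  then have psit_mono: "strict_mono_on {0..\<epsilon>} psit"
    using \<open>c > 0\<close> by (auto simp: strict_mono_on_def psit_def)
  have psit0: "psit 0 = 0" by (simp add: psit_def)
  have "psit \<theta> > 0" if "0 < \<theta>" "\<theta> \<le> \<epsilon>" for \<theta>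
    using strict_mono_onD[OF psit_mono, of 0 \<theta>] that by (simp add: psit0)
  moreover have "continuous_on {0..\<epsilon>} psit"
    unfolding psit_def by (intro continuous_intros continuous_on_compose2[OF h_cont]) auto
  ultimately show ?thesis
    using \<open>\<epsilon> > 0\<close> psit0 psit_mono bound
    by (intro exI[of _ \<epsilon>] conjI exI[of _ psit] allI impI INF_greatest) (auto simp: a_def)
qed

end
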